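(* Let $\Lambda\geq 0$. Let $F(z)=\bar{z}G(z)+H(z)$, $z\in\mathbb{D}$, where $G$ and $H$ are analytic in $\mathbb{D}$ with $G(0)=0$, $H(0)=0$, $H'(0)=1$, $|G'(z)|\leq\Lambda$ for all $z\in\mathbb{D}$, and either $|H(z)|<1$ for all $z\in\mathbb{D}$ or $|H'(z)|\leq 1$ for all $z\in\mathbb{D}$. Define $\rho_2=1$ if $0\leq\Lambda\leq 1/2$ and $\rho_2=\frac{1}{2\Lambda}$ if $\Lambda>1/2$, and $\sigma_2=\rho_2-\Lambda\rho_2^2$. Then $F$ is univalent in $\mathbb{D}_{\rho_2}$ and $F(\mathbb{D}_{\rho_2})\supseteq\mathbb{D}_{\sigma_2}$. This result is sharp (the constants $\rho_2$ and $\sigma_2$ cannot be replaced by larger ones), as shown by the function $F_2(z)=\Lambda|z|^2+z$.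
   Context: $\mathbb{D}=\{z:|z|<1\}$ and $\mathbb{D}_r=\{z\in\mathbb{C}:|z|<r\}$. *)

theory Defs
  imports "HOL-Analysis.Analysis"
begin

definition rho2 :: "real \<Rightarrow> real" where
  "rho2 \<Lambda> = (if \<Lambda> \<le> 1/2 then 1 else 1 / (2 * \<Lambda>))"

definition sigma2 :: "real \<Rightarrow> real" where
  "sigma2 \<Lambda> = rho2 \<Lambda> - \<Lambda> * (rho2 \<Lambda>)^2"

definition F2 :: "real \<Rightarrow> complex \<Rightarrow> complex" where
  "F2 \<Lambda> z = complex_of_real (\<Lambda> * (cmod z)^2) + z"

end

theory Submission
  imports Defs "HOL-Complex_Analysis.Complex_Analysis"
begin

text \<open>Either normalisation of \<open>H\<close> forces \<open>H = id\<close>: by the equality case of the Schwarz lemma,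
  resp. by the maximum modulus principle applied to \<open>H'\<close>. Hence \<open>F z = z + P z\<close> with
  \<open>P z = cnj z * G z\<close>, and \<open>|G'| \<le> \<Lambda>\<close>, \<open>G 0 = 0\<close> give
  \<open>|P x - P y| \<le> \<Lambda> (|x| + |y|) |x - y|\<close>. On a disc of radius \<open>\<rho>\<close> with \<open>2 \<Lambda> \<rho> \<le> 1\<close> this
  perturbation of the identity is therefore injective, and for \<open>|w| < \<rho> - \<Lambda> \<rho>\<^sup>2\<close> the map
  \<open>z \<mapsto> w - P z\<close> is a contraction of the closed disc of radius \<open>|w| + \<Lambda> \<rho>\<^sup>2\<close>, whose fixed
  point is a preimage of \<open>w\<close>. For sharpness, \<open>F\<^sub>2\<close> is the parabola \<open>\<Lambda> x\<^sup>2 + x\<close> on the real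
  axis: it is symmetric about \<open>-1/(2\<Lambda>)\<close>, and on \<open>[-\<rho>\<^sub>2, \<rho>\<^sub>2]\<close> its minimum is \<open>-\<sigma>\<^sub>2\<close>.\<close>

lemma Schwarz_normalized_eq_id:
  assumes "f holomorphic_on ball 0 1" and "f 0 = 0" and "deriv f 0 = 1"
    and "\<And>z. z \<in> ball 0 1 \<Longrightarrow> norm (f z) < 1" and "z \<in> ball 0 1"
  shows "f z = z"
proof -
  obtain \<alpha> where \<alpha>: "\<And>z. norm z < 1 \<Longrightarrow> f z = \<alpha> * z"
    using Schwarz_Lemma(3)[OF assms(1,2), of 0] assms(3,4) by auto
  have "(f has_field_derivative \<alpha>) (at 0)"
  proof (rule has_field_derivative_transform_within_open[of "\<lambda>z. \<alpha> * z" _ _ "ball 0 1"])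
    show "((*) \<alpha> has_field_derivative \<alpha>) (at 0)"
      by (auto intro!: derivative_eq_intros)
  qed (use \<alpha> in auto)
  then have "\<alpha> = 1"
    using assms(3) DERIV_imp_deriv by fastforce
  then show ?thesis
    using \<alpha> assms(5) by auto
qed

lemma deriv_bounded_normalized_eq_id:
  assumes "f holomorphic_on S" and "open S" and "connected S" and "0 \<in> S"
    and "f 0 = 0" and "deriv f 0 = 1"
    and "\<And>z. z \<in> S \<Longrightarrow> norm (deriv f z) \<le> 1" and "z \<in> S"
  shows "f z = z"
proof -
  have "deriv f constant_on S"
    by (rule maximum_modulus_principle[of _ S S 0])
       (use assms in \<open>auto intro: holomorphic_deriv\<close>)
  then have deriv_eq_1: "deriv f x = 1" if "x \<in> S" for x
    using that assms(4,6) unfolding constant_on_def by metis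
  have "(\<lambda>x. f x - x) constant_on S"
  proof (rule has_field_derivative_0_imp_constant_on)
    fix x assume "x \<in> S"
    then have "(f has_field_derivative 1) (at x)"
      using assms(1,2) deriv_eq_1 by (metis holomorphic_derivI)
    then show "((\<lambda>x. f x - x) has_field_derivative 0) (at x)"
      by (auto intro!: derivative_eq_intros)
  qed (use assms in auto)
  then obtain c where c: "\<And>x. x \<in> S \<Longrightarrow> f x - x = c"
    unfolding constant_on_def by blast
  have "c = 0"
    using c[OF assms(4)] assms(5) by simp
  then show ?thesis
    using c[OF assms(8)] by simp
qed

lemma holomorphic_deriv_bound_imp_lipschitz:
  assumes "f holomorphic_on S" and "open S" and "convex S"
    and "\<And>z. z \<in> S \<Longrightarrow> norm (deriv f z) \<le> B" and "x \<in> S" and "y \<in> S"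
  shows "norm (f x - f y) \<le> B * norm (x - y)"
proof (rule field_differentiable_bound[OF assms(3) _ assms(4-6)])
  fix z assume "z \<in> S"
  then show "(f has_field_derivative deriv f z) (at z within S)"
    using assms(1,2) holomorphic_derivI by blast
qed

lemma norm_cnj_mult_diff_le:
  fixes G :: "complex \<Rightarrow> complex"
  assumes lip: "\<And>x y. x \<in> S \<Longrightarrow> y \<in> S \<Longrightarrow> norm (G x - G y) \<le> L * norm (x - y)"
    and "0 \<in> S" and "G 0 = 0" and x: "x \<in> S" and y: "y \<in> S"
  shows "norm (cnj x * G x - cnj y * G y) \<le> L * (norm x + norm y) * norm (x - y)"
proof -
  have Gy: "norm (G y) \<le> L * norm y"
    using lip[OF y \<open>0 \<in> S\<close>] \<open>G 0 = 0\<close> by simp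
  have "norm (cnj x * G x - cnj y * G y) = norm (cnj x * (G x - G y) + cnj (x - y) * G y)"
    by (simp add: algebra_simps)
  also have "\<dots> \<le> norm x * norm (G x - G y) + norm (x - y) * norm (G y)"
    by (metis complex_mod_cnj norm_mult norm_triangle_ineq)
  also have "\<dots> \<le> norm x * (L * norm (x - y)) + norm (x - y) * (L * norm y)"
    by (intro add_mono mult_left_mono lip x y Gy) auto
  also have "\<dots> = L * (norm x + norm y) * norm (x - y)"
    by (simp add: algebra_simps)
  finally show ?thesis .
qed

lemma inj_on_ball_id_plus_perturbation:
  fixes F P :: "complex \<Rightarrow> complex"
  assumes F: "\<And>z. z \<in> ball 0 \<rho> \<Longrightarrow> F z = z + P z"
    and P: "\<And>x y. x \<in> ball 0 \<rho> \<Longrightarrow> y \<in> ball 0 \<rho> \<Longrightarrow>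
              norm (P x - P y) \<le> L * (norm x + norm y) * norm (x - y)"
    and "2 * L * \<rho> \<le> 1"
  shows "inj_on F (ball 0 \<rho>)"
proof (rule inj_onI, rule ccontr)
  fix x y assume x: "x \<in> ball 0 \<rho>" and y: "y \<in> ball 0 \<rho>" and "F x = F y" and "x \<noteq> y"
  have "L * (norm x + norm y) < 1"
  proof (cases "L > 0")
    case True
    with x y have "L * (norm x + norm y) < L * (2 * \<rho>)"
      by (intro mult_strict_left_mono) auto
    with \<open>2 * L * \<rho> \<le> 1\<close> show ?thesis by simp
  next
    case False
    then have "L * (norm x + norm y) \<le> 0"
      by (intro mult_nonpos_nonneg) auto
    then show ?thesis by simp
  qed
  then have "L * (norm x + norm y) * norm (x - y) < norm (x - y)"
    using \<open>x \<noteq> y\<close> by simp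
  moreover have "x - y = (F x - F y) - (P x - P y)"
    using F[OF x] F[OF y] by (simp add: algebra_simps)
  then have "norm (x - y) = norm (P x - P y)"
    using \<open>F x = F y\<close> by (simp add: norm_minus_commute)
  ultimately show False
    using P[OF x y] by simp
qed

lemma ball_subset_image_id_plus_perturbation:
  fixes F P :: "complex \<Rightarrow> complex"
  assumes F: "\<And>z. z \<in> ball 0 \<rho> \<Longrightarrow> F z = z + P z"
    and P: "\<And>x y. x \<in> ball 0 \<rho> \<Longrightarrow> y \<in> ball 0 \<rho> \<Longrightarrow>
              norm (P x - P y) \<le> L * (norm x + norm y) * norm (x - y)"
    and "P 0 = 0" and "0 \<le> L" and "2 * L * \<rho> \<le> 1"
  shows "ball 0 (\<rho> - L * \<rho>\<^sup>2) \<subseteq> F ` ball 0 \<rho>"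
proof
  fix w :: complex assume "w \<in> ball 0 (\<rho> - L * \<rho>\<^sup>2)"
  define r where "r = norm w + L * \<rho>\<^sup>2"
  have "0 \<le> r" "r < \<rho>"
    using \<open>w \<in> _\<close> \<open>0 \<le> L\<close> by (auto simp: r_def)
  then have disc: "cball 0 r \<subseteq> ball 0 \<rho>"
    by auto
  define T where "T z = w - P z" for z
  have "\<exists>!z\<in>cball 0 r. T z = z"
  proof (rule Banach_fix[where c = "2 * L * r"])
    show "complete (cball (0::complex) r)" "cball (0::complex) r \<noteq> {}"
      using \<open>0 \<le> r\<close> by (auto simp: complete_eq_closed)
    show "0 \<le> 2 * L * r"
      using \<open>0 \<le> L\<close> \<open>0 \<le> r\<close> by simp
    show "2 * L * r < 1"
    proof (cases "L = 0")
      case False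
      with \<open>0 \<le> L\<close> \<open>r < \<rho>\<close> have "2 * L * r < 2 * L * \<rho>"
        by (intro mult_strict_left_mono) auto
      with \<open>2 * L * \<rho> \<le> 1\<close> show ?thesis by simp
    qed simp
    show "T ` cball 0 r \<subseteq> cball 0 r"
    proof clarify
      fix z :: complex assume z: "z \<in> cball 0 r"
      have "z \<in> ball 0 \<rho>" "(0::complex) \<in> ball 0 \<rho>"
        using z disc \<open>0 \<le> r\<close> \<open>r < \<rho>\<close> by auto
      then have "norm (P z) \<le> L * norm z * norm z"
        using P[of z 0] \<open>P 0 = 0\<close> by simp
      also have "\<dots> \<le> L * \<rho>\<^sup>2"
      proof -
        have "norm z * norm z \<le> \<rho> * \<rho>"
          using z \<open>0 \<le> r\<close> \<open>r < \<rho>\<close> by (intro mult_mono) auto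
        then show ?thesis
          using \<open>0 \<le> L\<close> by (simp add: power2_eq_square mult.assoc mult_left_mono)
      qed
      finally show "T z \<in> cball 0 r"
        using norm_triangle_ineq4[of w "P z"] by (simp add: T_def r_def)
    qed
    fix x y :: complex assume x: "x \<in> cball 0 r" and y: "y \<in> cball 0 r"
    have "dist (T x) (T y) \<le> L * (norm x + norm y) * norm (x - y)"
      using P[of x y] x y \<open>r < \<rho>\<close> by (auto simp: T_def dist_norm norm_minus_commute)
    also have "\<dots> \<le> 2 * L * r * dist x y"
    proof -
      have "L * (norm x + norm y) \<le> L * (2 * r)"
        using x y \<open>0 \<le> L\<close> by (intro mult_left_mono) auto
      from mult_right_mono[OF this norm_ge_zero[of "x - y"]] show ?thesis
        by (simp add: dist_norm mult_ac)
    qed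
    finally show "dist (T x) (T y) \<le> 2 * L * r * dist x y" .
  qed
  then obtain z where "z \<in> cball 0 r" "T z = z"
    by auto
  then have z: "z \<in> ball 0 \<rho>"
    using disc by blast
  moreover have "F z = w"
    using F[OF z] \<open>T z = z\<close> unfolding T_def by (metis add.commute diff_add_cancel)
  ultimately show "w \<in> F ` ball 0 \<rho>"
    by blast
qed

lemma rho2_pos: "0 < rho2 L"
  and rho2_le_1: "rho2 L \<le> 1"
  and two_mult_rho2_le_1: "0 \<le> L \<Longrightarrow> 2 * L * rho2 L \<le> 1"
  by (auto simp: rho2_def)

lemma sigma2_nonneg:
  assumes "0 \<le> L"
  shows "0 \<le> sigma2 L"
proof -
  have "sigma2 L = rho2 L * (1 - L * rho2 L)"
    by (simp add: sigma2_def power2_eq_square algebra_simps)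
  moreover have "0 \<le> L * rho2 L"
    using assms rho2_pos[of L] by simp
  ultimately show ?thesis
    using rho2_pos[of L] two_mult_rho2_le_1[OF assms] by simp
qed

lemma F2_of_real: "F2 L (of_real x) = of_real (L * x\<^sup>2 + x)"
  by (simp add: F2_def)

lemma F2_not_inj_on_ball:
  assumes "rho2 L < r" and "r \<le> 1"
  shows "\<not> inj_on (F2 L) (ball 0 r)"
proof
  assume inj: "inj_on (F2 L) (ball 0 r)"
  have "2 * L * rho2 L = 1"
    using assms by (auto simp: rho2_def split: if_splits)
  define e where "e = (r - rho2 L) / 2"
  define a b where "a = e - rho2 L" and "b = - e - rho2 L"
  have "e > 0"
    using assms by (simp add: e_def)
  have "\<bar>a\<bar> < r" "\<bar>b\<bar> < r"
    using assms rho2_pos[of L] by (simp_all add: a_def b_def e_def abs_less_iff field_simps)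
  moreover have "(L * a\<^sup>2 + a) - (L * b\<^sup>2 + b) = 2 * e * (1 - 2 * L * rho2 L)"
    by (simp add: a_def b_def power2_eq_square algebra_simps)
  then have "F2 L (of_real a) = F2 L (of_real b)"
    using \<open>2 * L * rho2 L = 1\<close> unfolding F2_of_real by simp
  ultimately have "a = b"
    using inj by (auto dest: inj_onD)
  with \<open>e > 0\<close> show False
    by (simp add: a_def b_def)
qed

lemma quadratic_ge_left_endpoint:
  fixes L \<rho> x :: real
  assumes "0 \<le> L" and "2 * L * \<rho> \<le> 1" and "- \<rho> \<le> x"
  shows "L * \<rho>\<^sup>2 - \<rho> \<le> L * x\<^sup>2 + x"
proof -
  have "L * (- \<rho>) \<le> L * x"
    using assms by (intro mult_left_mono) auto
  then have "0 \<le> (x + \<rho>) * (1 - L * \<rho> + L * x)"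
    using assms by simp
  also have "\<dots> = (L * x\<^sup>2 + x) - (L * \<rho>\<^sup>2 - \<rho>)"
    by (simp add: power2_eq_square algebra_simps)
  finally show ?thesis by simp
qed

lemma F2_image_not_superset_ball:
  assumes "0 \<le> L" and "sigma2 L < s"
  shows "\<not> ball 0 s \<subseteq> F2 L ` ball 0 (rho2 L)"
proof
  assume sub: "ball 0 s \<subseteq> F2 L ` ball 0 (rho2 L)"
  define t where "t = (sigma2 L + s) / 2"
  have "sigma2 L < t" "t < s" "0 < t"
    using assms sigma2_nonneg[OF assms(1)] by (auto simp: t_def)
  then have "- of_real t \<in> F2 L ` ball 0 (rho2 L)"
    using sub by auto
  then obtain z where z: "z \<in> ball 0 (rho2 L)" and Fz: "F2 L z = - of_real t"
    by (metis imageE)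
  have "Im z = 0"
    using arg_cong[OF Fz, of Im] by (simp add: F2_def)
  then have "z = of_real (Re z)"
    by (simp add: complex_eq_iff)
  then have "L * (Re z)\<^sup>2 + Re z = - t"
    using Fz by (metis F2_of_real of_real_eq_iff of_real_minus)
  moreover have "- rho2 L \<le> Re z"
    using z abs_Re_le_cmod[of z] by auto
  ultimately show False
    using quadratic_ge_left_endpoint[OF assms(1) two_mult_rho2_le_1[OF assms(1)], of "Re z"]
      \<open>sigma2 L < t\<close> by (simp add: sigma2_def)
qed

theorem theorem2p2:
  fixes \<Lambda> :: real and F G H :: "complex \<Rightarrow> complex"
  assumes "\<Lambda> \<ge> 0"
    and "G holomorphic_on ball 0 1" and "H holomorphic_on ball 0 1"
    and "\<forall>z\<in>ball 0 1. F z = cnj z * G z + H z"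
    and "G 0 = 0" and "H 0 = 0" and "deriv H 0 = 1"
    and "\<forall>z\<in>ball 0 1. cmod (deriv G z) \<le> \<Lambda>"
    and "(\<forall>z\<in>ball 0 1. cmod (H z) < 1) \<or> (\<forall>z\<in>ball 0 1. cmod (deriv H z) \<le> 1)"
  shows "inj_on F (ball 0 (rho2 \<Lambda>))
    \<and> ball 0 (sigma2 \<Lambda>) \<subseteq> F ` ball 0 (rho2 \<Lambda>)
    \<and> (\<forall>r. rho2 \<Lambda> < r \<and> r \<le> 1 \<longrightarrow> \<not> inj_on (F2 \<Lambda>) (ball 0 r))
    \<and> (\<forall>s. sigma2 \<Lambda> < s \<longrightarrow> \<not> ball 0 s \<subseteq> F2 \<Lambda> ` ball 0 (rho2 \<Lambda>))"
proof -
  have H_id: "H z = z" if "z \<in> ball 0 1" for z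
    using assms(9)
    by (metis Schwarz_normalized_eq_id deriv_bounded_normalized_eq_id assms(3,6,7) that
        centre_in_ball convex_connected convex_ball open_ball zero_less_one)
  have G_lip: "norm (G x - G y) \<le> \<Lambda> * norm (x - y)" if "x \<in> ball 0 1" "y \<in> ball 0 1" for x y
    using holomorphic_deriv_bound_imp_lipschitz[OF assms(2)] assms(8) that by auto
  have disc: "ball 0 (rho2 \<Lambda>) \<subseteq> ball 0 1"
    by (rule subset_ball) (rule rho2_le_1)
  have F_eq: "F z = z + cnj z * G z" if "z \<in> ball 0 (rho2 \<Lambda>)" for z
  proof -
    have "z \<in> ball 0 1"
      using that disc by blast
    then show ?thesis
      using assms(4) H_id by (simp add: add.commute)
  qed
  have P_est: "norm (cnj x * G x - cnj y * G y) \<le> \<Lambda> * (norm x + norm y) * norm (x - y)"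
    if "x \<in> ball 0 (rho2 \<Lambda>)" "y \<in> ball 0 (rho2 \<Lambda>)" for x y
  proof -
    have "x \<in> ball 0 1" "y \<in> ball 0 1"
      using that disc by blast+
    then show ?thesis
      using norm_cnj_mult_diff_le[where S = "ball 0 1", OF G_lip _ assms(5)] by simp
  qed
  show ?thesis
    using inj_on_ball_id_plus_perturbation[OF F_eq P_est]
      ball_subset_image_id_plus_perturbation[OF F_eq P_est _ assms(1)]
      two_mult_rho2_le_1[OF assms(1)] F2_not_inj_on_ball
      F2_image_not_superset_ball[OF assms(1)]
    by (simp add: sigma2_def)
qed

end
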